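(* Let $p,r$ be coprime positive integers and $q=0$. Then $\mathcal O(L_0(p,r))$, with the $\mathbb C[u,u^{-1}]$-coaction given by its $\mathbb Z$-grading, is a quantum principal $U(1)$-fibration (principal $\mathbb C[u,u^{-1}]$-comodule algebra) over its coinvariant subalgebra $\mathcal O(\mathbb{WP}_0(1,r))$.
   Context: $\mathcal O(SU_0(2))$ is the unital complex $*$-algebra generated by $\alpha,\beta$ with relations $\beta\alpha=0$, $\beta^*\alpha=0$, $\beta\beta^*=\beta^*\beta$, $\alpha^*\alpha=1$, $\alpha\alpha^*+\beta\beta^*=1$. Give it the $\mathbb Z$-grading (weight) $w(\alpha)=1$, $w(\alpha^* )=-1$, $w(\beta)=r$, $w(\beta^* )=-r$. $\mathcal O(L_0(p,r))$ is the subalgebra of elements whose homogeneous components have weight in $p\mathbb Z$, graded by $\deg=w/p$, with coaction $\rho(x)=x\otimes u^{n}$ for $x$ of degree $n$; $\mathcal O(\mathbb{WP}_0(1,r))$ is its degree-zero subalgebra $B$. $A$ is a quantum principal fibration over $B$ if the canonical map $A\otimes_BA\to A\otimes\mathbb C[u,u^{-1}]$, $x\otimes y\mapsto xy\otimes u^n$ ($y$ of degree $n$), is bijective and the multiplication map $B\otimes A\to A$ admits a splitting that is a left $B$-module and right $\mathbb C[u,u^{-1}]$-comodule map. *)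

theory Defs
  imports Complex_Main "HOL-Library.Poly_Mapping"
begin

datatype gen = Al | Alst | Be | Best

type_synonym falg = "gen list \<Rightarrow>\<^sub>0 complex"

fun gstar :: "gen \<Rightarrow> gen" where
  "gstar Al = Alst" | "gstar Alst = Al" | "gstar Be = Best" | "gstar Best = Be"

definition fmul :: "falg \<Rightarrow> falg \<Rightarrow> falg" where
  "fmul x y = (\<Sum>u\<in>Poly_Mapping.keys x. \<Sum>v\<in>Poly_Mapping.keys y. Poly_Mapping.single (u @ v) (Poly_Mapping.lookup x u * Poly_Mapping.lookup y v))"

definition fsmul :: "complex \<Rightarrow> falg \<Rightarrow> falg" where
  "fsmul c x = Poly_Mapping.map (\<lambda>z. c * z) x"

definition fone :: falg where
  "fone = Poly_Mapping.single [] 1"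

definition fstar :: "falg \<Rightarrow> falg" where
  "fstar x = (\<Sum>w\<in>Poly_Mapping.keys x. Poly_Mapping.single (rev (List.map gstar w)) (cnj (Poly_Mapping.lookup x w)))"

definition fgen :: "gen \<Rightarrow> falg" where
  "fgen a = Poly_Mapping.single [a] 1"

definition su0_relators :: "falg set" where
  "su0_relators =
     { fmul (fgen Be) (fgen Al),
       fmul (fgen Best) (fgen Al),
       fmul (fgen Be) (fgen Best) - fmul (fgen Best) (fgen Be),
       fmul (fgen Alst) (fgen Al) - fone,
       fmul (fgen Al) (fgen Alst) + fmul (fgen Be) (fgen Best) - fone }"

text \<open>We work with representatives in the free algebra:
  two representatives are equal in O(SU_0(2)) iff their difference lies in su0_ideal.\<close>
inductive_set su0_ideal :: "falg set" where
  rel:  "x \<in> su0_relators \<Longrightarrow> x \<in> su0_ideal"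
| zero: "0 \<in> su0_ideal"
| add:  "x \<in> su0_ideal \<Longrightarrow> y \<in> su0_ideal \<Longrightarrow> x + y \<in> su0_ideal"
| smul: "x \<in> su0_ideal \<Longrightarrow> fsmul c x \<in> su0_ideal"
| lmul: "x \<in> su0_ideal \<Longrightarrow> fmul y x \<in> su0_ideal"
| rmul: "x \<in> su0_ideal \<Longrightarrow> fmul x y \<in> su0_ideal"
| star: "x \<in> su0_ideal \<Longrightarrow> fstar x \<in> su0_ideal"

fun gwt :: "nat \<Rightarrow> gen \<Rightarrow> int" where
  "gwt r Al = 1" | "gwt r Alst = -1" | "gwt r Be = int r" | "gwt r Best = - int r"

definition wt :: "nat \<Rightarrow> gen list \<Rightarrow> int" where
  "wt r w = sum_list (List.map (gwt r) w)"

text \<open>Homogeneous component of weight m (the relators are homogeneous, so this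
  descends to O(SU_0(2))).\<close>
definition hcomp :: "nat \<Rightarrow> int \<Rightarrow> falg \<Rightarrow> falg" where
  "hcomp r m x = (\<Sum>w\<in>{w \<in> Poly_Mapping.keys x. wt r w = m}. Poly_Mapping.single w (Poly_Mapping.lookup x w))"

text \<open>Representatives of elements of O(L_0(p,r)) of degree n (weight p*n).\<close>
definition Ldeg :: "nat \<Rightarrow> nat \<Rightarrow> int \<Rightarrow> falg set" where
  "Ldeg p r n = {x. \<forall>m. m \<noteq> int p * n \<longrightarrow> hcomp r m x \<in> su0_ideal}"

text \<open>Representatives of elements of O(L_0(p,r)): all homogeneous components
  have weight in pZ.\<close>
definition Lset :: "nat \<Rightarrow> nat \<Rightarrow> falg set" where
  "Lset p r = {x. \<forall>m. \<not> int p dvd m \<longrightarrow> hcomp r m x \<in> su0_ideal}"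

text \<open>Representatives of elements of O(WP_0(1,r)) = degree-zero part.\<close>
definition WPset :: "nat \<Rightarrow> nat \<Rightarrow> falg set" where
  "WPset p r = Ldeg p r 0"

type_synonym ftens = "(falg \<times> falg) \<Rightarrow>\<^sub>0 complex"

definition tsingle :: "falg \<Rightarrow> falg \<Rightarrow> ftens" where
  "tsingle x y = Poly_Mapping.single (x, y) 1"

definition tsmul :: "complex \<Rightarrow> ftens \<Rightarrow> ftens" where
  "tsmul c t = Poly_Mapping.map (\<lambda>z. c * z) t"

definition Tform :: "falg set \<Rightarrow> falg set \<Rightarrow> ftens set" where
  "Tform X Y = {t. Poly_Mapping.keys t \<subseteq> X \<times> Y}"

text \<open>The subspace of relations defining X (tensor over R) Y, where X, Y are sets of
  representatives (modulo su0_ideal) of a right R-module and a left R-module, and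
  R a set of representatives of the ring. For a tensor product over the complex
  numbers take R = {} (scalars are handled by the bilinearity relations).\<close>
inductive_set tens_rel :: "falg set \<Rightarrow> falg set \<Rightarrow> falg set \<Rightarrow> ftens set"
  for R X Y where
  zero: "0 \<in> tens_rel R X Y"
| add: "s \<in> tens_rel R X Y \<Longrightarrow> t \<in> tens_rel R X Y \<Longrightarrow> s + t \<in> tens_rel R X Y"
| smul: "s \<in> tens_rel R X Y \<Longrightarrow> tsmul c s \<in> tens_rel R X Y"
| addl: "x \<in> X \<Longrightarrow> x' \<in> X \<Longrightarrow> y \<in> Y \<Longrightarrow>
           tsingle (x + x') y - tsingle x y - tsingle x' y \<in> tens_rel R X Y"
| addr: "x \<in> X \<Longrightarrow> y \<in> Y \<Longrightarrow> y' \<in> Y \<Longrightarrow>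
           tsingle x (y + y') - tsingle x y - tsingle x y' \<in> tens_rel R X Y"
| scl: "x \<in> X \<Longrightarrow> y \<in> Y \<Longrightarrow> tsingle (fsmul c x) y - tsmul c (tsingle x y) \<in> tens_rel R X Y"
| scr: "x \<in> X \<Longrightarrow> y \<in> Y \<Longrightarrow> tsingle x (fsmul c y) - tsmul c (tsingle x y) \<in> tens_rel R X Y"
| eql: "x \<in> X \<Longrightarrow> x' \<in> X \<Longrightarrow> y \<in> Y \<Longrightarrow> x - x' \<in> su0_ideal \<Longrightarrow>
           tsingle x y - tsingle x' y \<in> tens_rel R X Y"
| eqr: "x \<in> X \<Longrightarrow> y \<in> Y \<Longrightarrow> y' \<in> Y \<Longrightarrow> y - y' \<in> su0_ideal \<Longrightarrow>
           tsingle x y - tsingle x y' \<in> tens_rel R X Y"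
| bal: "x \<in> X \<Longrightarrow> b \<in> R \<Longrightarrow> y \<in> Y \<Longrightarrow>
           tsingle (fmul x b) y - tsingle x (fmul b y) \<in> tens_rel R X Y"

definition tmult :: "ftens \<Rightarrow> falg" where
  "tmult t = (\<Sum>(x, y)\<in>Poly_Mapping.keys t. fsmul (Poly_Mapping.lookup t (x, y)) (fmul x y))"

definition tlmul :: "falg \<Rightarrow> ftens \<Rightarrow> ftens" where
  "tlmul b t = (\<Sum>(x, y)\<in>Poly_Mapping.keys t. Poly_Mapping.single (fmul b x, y) (Poly_Mapping.lookup t (x, y)))"

text \<open>Canonical map A \<otimes>_B A \<rightarrow> A \<otimes> C[u,u^-1], x \<otimes> y \<mapsto> x y_n \<otimes> u^n summed over
  the degree-n components y_n of y. An element of A \<otimes> C[u,u^-1] is identified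
  with the finitely supported family of its coefficients of u^n (n \<in> Z).\<close>
definition can_map :: "nat \<Rightarrow> nat \<Rightarrow> ftens \<Rightarrow> int \<Rightarrow> falg" where
  "can_map p r t n = (\<Sum>(x, y)\<in>Poly_Mapping.keys t. fsmul (Poly_Mapping.lookup t (x, y)) (fmul x (hcomp r (int p * n) y)))"

definition can_bijective :: "nat \<Rightarrow> nat \<Rightarrow> bool" where
  "can_bijective p r \<longleftrightarrow>
     (\<forall>t \<in> Tform (Lset p r) (Lset p r).
        (\<forall>n. can_map p r t n \<in> su0_ideal) \<longrightarrow> t \<in> tens_rel (WPset p r) (Lset p r) (Lset p r))
   \<and> (\<forall>g :: int \<Rightarrow> falg. (\<forall>n. g n \<in> Lset p r) \<and> finite {n. g n \<notin> su0_ideal} \<longrightarrow>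
        (\<exists>t \<in> Tform (Lset p r) (Lset p r). \<forall>n. can_map p r t n - g n \<in> su0_ideal))"

text \<open>A splitting s : A \<rightarrow> B \<otimes> A (tensor over C) of the multiplication map
  B \<otimes> A \<rightarrow> A which is a well-defined linear map, a left B-module map and a right
  C[u,u^-1]-comodule map (i.e. maps the degree-n part of A into B \<otimes> A_n).\<close>
definition has_equivariant_splitting :: "nat \<Rightarrow> nat \<Rightarrow> bool" where
  "has_equivariant_splitting p r \<longleftrightarrow>
     (\<exists>s :: falg \<Rightarrow> ftens.
        let A = Lset p r; B = WPset p r; N = tens_rel {} B A in
        (\<forall>a \<in> A. s a \<in> Tform B A)
      \<and> (\<forall>a \<in> A. \<forall>a' \<in> A. a - a' \<in> su0_ideal \<longrightarrow> s a - s a' \<in> N)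
      \<and> (\<forall>a \<in> A. \<forall>a' \<in> A. s (a + a') - s a - s a' \<in> N)
      \<and> (\<forall>a \<in> A. \<forall>c. s (fsmul c a) - tsmul c (s a) \<in> N)
      \<and> (\<forall>b \<in> B. \<forall>a \<in> A. s (fmul b a) - tlmul b (s a) \<in> N)
      \<and> (\<forall>n. \<forall>a \<in> Ldeg p r n. \<exists>t \<in> Tform B (Ldeg p r n). s a - t \<in> N)
      \<and> (\<forall>a \<in> A. tmult (s a) - a \<in> su0_ideal))"

definition quantum_principal_fibration :: "nat \<Rightarrow> nat \<Rightarrow> bool" where
  "quantum_principal_fibration p r \<longleftrightarrow> can_bijective p r \<and> has_equivariant_splitting p r"

end

theory Submission
  imports Defs
begin

text \<open>
  A Z-graded algebra is a principal comodule algebra over its degree-zero part as soon as,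
  in every degree n, the unit is a finite sum of products c_i d_i with c_i of degree -n and
  d_i of degree n: then x \<otimes> y \<mapsto> sum_n sum_i x y_n c_i \<otimes> d_i inverts the canonical map,
  and a \<mapsto> sum_n sum_i a_n c_i \<otimes> d_i splits the multiplication B \<otimes> A \<rightarrow> A as required.
  In O(SU_0(2)) such a partition of unity exists in every weight m. For m \<ge> 0 it is
  alpha*^m alpha^m = 1. For m = -M < 0, with e_k = (r - 1) M + k,
    alpha^M alpha*^M + sum_{k<M} (alpha^k beta^M alpha*^e_k) (alpha^e_k beta*^M alpha*^k) = 1,
  since alpha*^e alpha^e = 1, beta^M beta*^M = beta beta* (from beta alpha = 0 and
  alpha alpha* + beta beta* = 1), and the sum telescopes along
  alpha^k (alpha alpha* + beta beta*) alpha*^k = alpha^k alpha*^k.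
\<close>

text \<open>Making words a monoid turns \<open>falg\<close> into the monoid algebra of the free monoid,
  so that \<open>fmul\<close> becomes the ring multiplication of poly_mapping.\<close>

instantiation list :: (type) monoid_add
begin
definition zero_list_def: "(0::'a list) = []"
definition plus_list_def: "(xs::'a list) + ys = xs @ ys"
instance by standard (auto simp: zero_list_def plus_list_def)
end

lemma poly_mapping_sum_single:
  "(x :: 'a \<Rightarrow>\<^sub>0 'b::comm_monoid_add) = (\<Sum>k\<in>Poly_Mapping.keys x. Poly_Mapping.single k (Poly_Mapping.lookup x k))"
proof (rule poly_mapping_eqI)
  fix w
  show "Poly_Mapping.lookup x w = Poly_Mapping.lookup (\<Sum>k\<in>Poly_Mapping.keys x. Poly_Mapping.single k (Poly_Mapping.lookup x k)) w"
    by (cases "w \<in> Poly_Mapping.keys x") (auto simp: lookup_sum lookup_single when_def in_keys_iff)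
qed

lemma fmul_eq_times: "fmul x y = x * y"
proof -
  have "x * y = (\<Sum>u\<in>Poly_Mapping.keys x. Poly_Mapping.single u (Poly_Mapping.lookup x u))
              * (\<Sum>v\<in>Poly_Mapping.keys y. Poly_Mapping.single v (Poly_Mapping.lookup y v))"
    using poly_mapping_sum_single[of x] poly_mapping_sum_single[of y] by simp
  also have "\<dots> = fmul x y"
    by (simp add: fmul_def sum_product mult_single plus_list_def)
  finally show ?thesis ..
qed

lemma fsmul_eq_times: "fsmul c x = Poly_Mapping.single [] c * x"
  using mult_map_scale_conv_mult[of c x] by (simp add: fsmul_def zero_list_def)

lemma fsmul_zero [simp]: "fsmul c 0 = 0"
  by (simp add: fsmul_eq_times)

lemma fone_eq_one: "fone = 1"
  by (metis single_one zero_list_def fone_def)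

definition mon :: "gen list \<Rightarrow> falg" where
  "mon w = Poly_Mapping.single w 1"

lemma mon_mult: "mon u * mon v = mon (u @ v)"
  by (simp add: mon_def mult_single plus_list_def)

lemma mon_Nil: "mon [] = 1"
  by (metis single_one zero_list_def mon_def)

lemma fgen_eq_mon: "fgen a = mon [a]"
  by (simp add: fgen_def mon_def)

definition coeff_sum :: "('k \<Rightarrow> 'c::zero \<Rightarrow> 'r::comm_monoid_add) \<Rightarrow> ('k \<Rightarrow>\<^sub>0 'c) \<Rightarrow> 'r" where
  "coeff_sum F x = (\<Sum>k\<in>Poly_Mapping.keys x. F k (Poly_Mapping.lookup x k))"

definition coeff_additive :: "('k \<Rightarrow> 'c::comm_monoid_add \<Rightarrow> 'r::comm_monoid_add) \<Rightarrow> bool" where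
  "coeff_additive F \<longleftrightarrow> (\<forall>k. F k 0 = 0) \<and> (\<forall>k a b. F k (a + b) = F k a + F k b)"

lemma coeff_sum_zero [simp]: "coeff_sum F 0 = 0"
  by (simp add: coeff_sum_def)

lemma coeff_sum_add:
  "coeff_additive F \<Longrightarrow> coeff_sum F (x + y) = coeff_sum F x + coeff_sum F y"
  unfolding coeff_sum_def coeff_additive_def by (rule setsum_keys_plus_distrib) auto

lemma coeff_sum_single:
  "coeff_additive F \<Longrightarrow> coeff_sum F (Poly_Mapping.single k c) = F k c"
  by (cases "c = 0") (auto simp: coeff_sum_def coeff_additive_def)

lemma coeff_sum_sum:
  "coeff_additive F \<Longrightarrow> coeff_sum F (\<Sum>i\<in>I. f i) = (\<Sum>i\<in>I. coeff_sum F (f i))"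
  by (induction I rule: infinite_finite_induct) (auto simp: coeff_sum_add)

lemma coeff_sum_sum_list:
  "coeff_additive F \<Longrightarrow> coeff_sum F (sum_list (map f xs)) = sum_list (map (\<lambda>i. coeff_sum F (f i)) xs)"
  by (induction xs) (auto simp: coeff_sum_add)

lemma wt_Nil [simp]: "wt r [] = 0"
  by (simp add: wt_def)

lemma wt_Cons [simp]: "wt r (a # v) = gwt r a + wt r v"
  by (simp add: wt_def)

lemma wt_append [simp]: "wt r (u @ v) = wt r u + wt r v"
  by (simp add: wt_def)

lemma wt_replicate [simp]: "wt r (replicate k a) = int k * gwt r a"
  by (induction k) (auto simp: algebra_simps)

lemma gwt_gstar [simp]: "gwt r (gstar a) = - gwt r a"
  by (cases a) auto

lemma wt_rev_map_gstar [simp]: "wt r (rev (map gstar w)) = - wt r w"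
  by (induction w) auto

lemma lookup_hcomp:
  "Poly_Mapping.lookup (hcomp r m x) w = (if wt r w = m then Poly_Mapping.lookup x w else 0)"
  by (cases "w \<in> Poly_Mapping.keys x") (auto simp: hcomp_def lookup_sum lookup_single when_def in_keys_iff)

lemma keys_hcomp: "Poly_Mapping.keys (hcomp r m x) = {w \<in> Poly_Mapping.keys x. wt r w = m}"
  by (auto simp: in_keys_iff lookup_hcomp split: if_splits)

lemma lookup_fsmul: "Poly_Mapping.lookup (fsmul c x) w = c * Poly_Mapping.lookup x w"
  by (simp add: fsmul_def Poly_Mapping.map.rep_eq when_def)

lemma hcomp_zero [simp]: "hcomp r m 0 = 0"
  by (simp add: hcomp_def)

lemma hcomp_add: "hcomp r m (x + y) = hcomp r m x + hcomp r m y"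
  by (rule poly_mapping_eqI) (simp add: lookup_hcomp lookup_add)

lemma hcomp_diff: "hcomp r m (x - y) = hcomp r m x - hcomp r m y"
  by (rule poly_mapping_eqI) (simp add: lookup_hcomp lookup_minus)

lemma hcomp_fsmul: "hcomp r m (fsmul c x) = fsmul c (hcomp r m x)"
  by (rule poly_mapping_eqI) (simp add: lookup_hcomp lookup_fsmul)

lemma hcomp_sum: "hcomp r m (\<Sum>i\<in>I. f i) = (\<Sum>i\<in>I. hcomp r m (f i))"
  by (rule poly_mapping_eqI) (simp add: lookup_hcomp lookup_sum)

lemma hcomp_single:
  "hcomp r m (Poly_Mapping.single w c) = (if wt r w = m then Poly_Mapping.single w c else 0)"
  by (rule poly_mapping_eqI) (simp add: lookup_hcomp lookup_single when_def)

lemma hcomp_eq_0: "m \<notin> wt r ` Poly_Mapping.keys x \<Longrightarrow> hcomp r m x = 0"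
  by (rule poly_mapping_eqI) (force simp: lookup_hcomp in_keys_iff)

lemma sum_hcomp:
  assumes "finite K" "wt r ` Poly_Mapping.keys x \<subseteq> K"
  shows "(\<Sum>m\<in>K. hcomp r m x) = x"
proof (rule poly_mapping_eqI)
  fix w
  show "Poly_Mapping.lookup (\<Sum>m\<in>K. hcomp r m x) w = Poly_Mapping.lookup x w"
    using assms by (cases "w \<in> Poly_Mapping.keys x") (auto simp: lookup_sum lookup_hcomp in_keys_iff)
qed

definition homog :: "nat \<Rightarrow> int \<Rightarrow> falg \<Rightarrow> bool" where
  "homog r i x \<longleftrightarrow> (\<forall>w\<in>Poly_Mapping.keys x. wt r w = i)"

lemma homog_hcomp: "homog r m (hcomp r m x)"
  by (simp add: homog_def keys_hcomp)

lemma homog_mon: "wt r w = i \<Longrightarrow> homog r i (mon w)"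
  by (simp add: homog_def mon_def)

lemma homog_add: "homog r i x \<Longrightarrow> homog r i y \<Longrightarrow> homog r i (x + y)"
  using keys_add[of x y] by (auto simp: homog_def)

lemma homog_diff: "homog r i x \<Longrightarrow> homog r i y \<Longrightarrow> homog r i (x - y)"
  using keys_diff[of x y] by (auto simp: homog_def)

lemma homog_mult: "homog r i a \<Longrightarrow> homog r j b \<Longrightarrow> homog r (i + j) (a * b)"
  using keys_mult[of a b] by (auto simp: homog_def plus_list_def)

lemma hcomp_homog: "homog r i x \<Longrightarrow> hcomp r m x = (if m = i then x else 0)"
  by (rule poly_mapping_eqI) (auto simp: homog_def lookup_hcomp in_keys_iff)

lemma hcomp_mult:
  assumes "finite K" "wt r ` Poly_Mapping.keys a \<subseteq> K" "finite J" "wt r ` Poly_Mapping.keys b \<subseteq> J"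
  shows "hcomp r m (a * b) = (\<Sum>k\<in>K. \<Sum>j\<in>J. if k + j = m then hcomp r k a * hcomp r j b else 0)"
proof -
  have "a * b = (\<Sum>k\<in>K. hcomp r k a) * (\<Sum>j\<in>J. hcomp r j b)"
    using sum_hcomp[OF assms(1,2)] sum_hcomp[OF assms(3,4)] by simp
  then have "hcomp r m (a * b) = (\<Sum>k\<in>K. \<Sum>j\<in>J. hcomp r m (hcomp r k a * hcomp r j b))"
    by (simp add: sum_product hcomp_sum)
  also have "\<dots> = (\<Sum>k\<in>K. \<Sum>j\<in>J. if k + j = m then hcomp r k a * hcomp r j b else 0)"
    by (intro sum.cong refl) (simp add: hcomp_homog[OF homog_mult[OF homog_hcomp homog_hcomp]])
  finally show ?thesis .
qed

lemma hcomp_homog_mult: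
  assumes "homog r i h"
  shows "hcomp r m (h * a) = h * hcomp r (m - i) a"
proof -
  let ?J = "wt r ` Poly_Mapping.keys a"
  have "hcomp r m (h * a) = (\<Sum>k\<in>{i}. \<Sum>j\<in>?J. if k + j = m then hcomp r k h * hcomp r j a else 0)"
    by (rule hcomp_mult) (use assms in \<open>auto simp: homog_def\<close>)
  also have "\<dots> = (\<Sum>j\<in>?J. if i + j = m then h * hcomp r j a else 0)"
    by (simp add: hcomp_homog[OF assms] cong: if_cong)
  also have "\<dots> = (\<Sum>j\<in>?J. if j = m - i then h * hcomp r j a else 0)"
    by (rule sum.cong) auto
  also have "\<dots> = h * hcomp r (m - i) a"
    using hcomp_eq_0[of "m - i" r a] by (auto simp: sum.delta')
  finally show ?thesis .
qed

section \<open>The defining ideal is graded\<close>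

lemma su0_ideal_mult_left: "x \<in> su0_ideal \<Longrightarrow> y * x \<in> su0_ideal"
  using su0_ideal.lmul[of x y] by (simp add: fmul_eq_times)

lemma su0_ideal_mult_right: "x \<in> su0_ideal \<Longrightarrow> x * y \<in> su0_ideal"
  using su0_ideal.rmul[of x y] by (simp add: fmul_eq_times)

lemma su0_ideal_uminus:
  assumes "x \<in> su0_ideal"
  shows "- x \<in> su0_ideal"
proof -
  have "Poly_Mapping.single [] (-1::complex) * x = - x"
    using single_uminus[of "[]::gen list" "1::complex"] by (simp flip: zero_list_def)
  then show ?thesis
    using su0_ideal_mult_left[OF assms, of "Poly_Mapping.single [] (-1)"] by simp
qed

lemma su0_ideal_diff: "x \<in> su0_ideal \<Longrightarrow> y \<in> su0_ideal \<Longrightarrow> x - y \<in> su0_ideal"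
  unfolding diff_conv_add_uminus by (intro su0_ideal.add su0_ideal_uminus)

lemma su0_ideal_sum: "(\<And>i. i \<in> A \<Longrightarrow> f i \<in> su0_ideal) \<Longrightarrow> (\<Sum>i\<in>A. f i) \<in> su0_ideal"
  by (induction A rule: infinite_finite_induct) (auto intro: su0_ideal.zero su0_ideal.add)

lemma su0_ideal_trans: "x - y \<in> su0_ideal \<Longrightarrow> y - z \<in> su0_ideal \<Longrightarrow> x - z \<in> su0_ideal"
  using su0_ideal.add[of "x - y" "y - z"] by simp

lemma su0_ideal_sym: "x - y \<in> su0_ideal \<Longrightarrow> y - x \<in> su0_ideal"
  using su0_ideal_uminus[of "x - y"] by simp

lemma su0_ideal_sandwich: "x - y \<in> su0_ideal \<Longrightarrow> a * x * b - a * y * b \<in> su0_ideal"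
  using su0_ideal_mult_right[OF su0_ideal_mult_left[of "x - y" a], of b] by (simp add: algebra_simps)

lemma fstar_eq_coeff_sum:
  "fstar x = coeff_sum (\<lambda>w c. Poly_Mapping.single (rev (map gstar w)) (cnj c)) x"
  by (simp add: fstar_def coeff_sum_def)

lemma coeff_additive_fstar: "coeff_additive (\<lambda>w c. Poly_Mapping.single (rev (map gstar w)) (cnj c))"
  by (auto simp: coeff_additive_def single_add)

lemma hcomp_fstar: "hcomp r m (fstar x) = fstar (hcomp r (-m) x)"
proof -
  have "hcomp r m (fstar x) = (\<Sum>w\<in>Poly_Mapping.keys x.
          if wt r w = -m then Poly_Mapping.single (rev (map gstar w)) (cnj (Poly_Mapping.lookup x w)) else 0)"
    by (auto simp: fstar_def hcomp_sum hcomp_single intro!: sum.cong)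
  also have "\<dots> = fstar (\<Sum>w\<in>Poly_Mapping.keys x. if wt r w = -m then Poly_Mapping.single w (Poly_Mapping.lookup x w) else 0)"
    by (simp add: fstar_eq_coeff_sum coeff_sum_sum coeff_additive_fstar coeff_sum_single if_distrib cong: if_cong)
  also have "\<dots> = fstar (hcomp r (-m) x)"
    by (simp add: hcomp_def sum.inter_filter)
  finally show ?thesis .
qed

lemma su0_relator_homog: "x \<in> su0_relators \<Longrightarrow> \<exists>i. homog r i x"
proof -
  assume x: "x \<in> su0_relators"
  have "homog r (1 + int r) (mon [Be, Al])" "homog r (1 - int r) (mon [Best, Al])"
    "homog r 0 (mon [Be, Best] - mon [Best, Be])" "homog r 0 (mon [Alst, Al] - mon [])"
    "homog r 0 (mon [Al, Alst] + mon [Be, Best] - mon [])"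
    by (intro homog_diff homog_add homog_mon; simp)+
  with x show ?thesis
    unfolding su0_relators_def fgen_eq_mon fmul_eq_times fone_eq_one mon_Nil[symmetric]
    by (auto simp: mon_mult)
qed

lemma hcomp_su0_ideal: "x \<in> su0_ideal \<Longrightarrow> hcomp r m x \<in> su0_ideal"
proof (induction x arbitrary: m rule: su0_ideal.induct)
  case (rel x)
  then obtain i where "homog r i x" using su0_relator_homog by blast
  then show ?case using rel su0_ideal.rel by (simp add: hcomp_homog su0_ideal.zero)
next
  case zero
  then show ?case by (simp add: su0_ideal.zero)
next
  case (add x y)
  then show ?case by (simp add: hcomp_add su0_ideal.add)
next
  case (smul x c)
  then show ?case by (simp add: hcomp_fsmul su0_ideal.smul)
next
  case (lmul x y)
  have "hcomp r m (y * x) = (\<Sum>k\<in>wt r ` Poly_Mapping.keys y. \<Sum>j\<in>wt r ` Poly_Mapping.keys x.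
          if k + j = m then hcomp r k y * hcomp r j x else 0)"
    by (rule hcomp_mult) auto
  also have "\<dots> \<in> su0_ideal"
    using lmul.IH by (auto intro!: su0_ideal_sum su0_ideal_mult_left su0_ideal.zero)
  finally show ?case by (simp add: fmul_eq_times)
next
  case (rmul x y)
  have "hcomp r m (x * y) = (\<Sum>k\<in>wt r ` Poly_Mapping.keys x. \<Sum>j\<in>wt r ` Poly_Mapping.keys y.
          if k + j = m then hcomp r k x * hcomp r j y else 0)"
    by (rule hcomp_mult) auto
  also have "\<dots> \<in> su0_ideal"
    using rmul.IH by (auto intro!: su0_ideal_sum su0_ideal_mult_right su0_ideal.zero)
  finally show ?case by (simp add: fmul_eq_times)
next
  case (star x)
  then show ?case by (simp add: hcomp_fstar su0_ideal.star)
qed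

definition concentrated :: "nat \<Rightarrow> int set \<Rightarrow> falg \<Rightarrow> bool" where
  "concentrated r S x \<longleftrightarrow> (\<forall>m. m \<notin> S \<longrightarrow> hcomp r m x \<in> su0_ideal)"

lemma Lset_iff_concentrated: "x \<in> Lset p r \<longleftrightarrow> concentrated r {m. int p dvd m} x"
  by (simp add: Lset_def concentrated_def)

lemma Ldeg_iff_concentrated: "x \<in> Ldeg p r n \<longleftrightarrow> concentrated r {int p * n} x"
  by (simp add: Ldeg_def concentrated_def)

lemma WPset_iff_concentrated: "x \<in> WPset p r \<longleftrightarrow> concentrated r {0} x"
  by (simp add: WPset_def Ldeg_iff_concentrated)

lemma concentrated_mono: "concentrated r S x \<Longrightarrow> S \<subseteq> T \<Longrightarrow> concentrated r T x"
  by (auto simp: concentrated_def)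

lemma concentrated_add: "concentrated r S x \<Longrightarrow> concentrated r S y \<Longrightarrow> concentrated r S (x + y)"
  by (simp add: concentrated_def hcomp_add su0_ideal.add)

lemma concentrated_fsmul: "concentrated r S x \<Longrightarrow> concentrated r S (fsmul c x)"
  by (simp add: concentrated_def hcomp_fsmul su0_ideal.smul)

lemma concentrated_su0_ideal: "x \<in> su0_ideal \<Longrightarrow> concentrated r S x"
  by (simp add: concentrated_def hcomp_su0_ideal)

lemma concentrated_sum: "(\<And>k. k \<in> A \<Longrightarrow> concentrated r S (f k)) \<Longrightarrow> concentrated r S (\<Sum>k\<in>A. f k)"
  by (induction A rule: infinite_finite_induct)
     (auto intro: concentrated_add concentrated_su0_ideal su0_ideal.zero)

lemma concentrated_homog: "homog r i x \<Longrightarrow> i \<in> S \<Longrightarrow> concentrated r S x"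
  by (auto simp: concentrated_def hcomp_homog su0_ideal.zero)

lemma concentrated_mult:
  assumes a: "concentrated r S a" and b: "concentrated r T b"
    and ST: "\<And>k j. k \<in> S \<Longrightarrow> j \<in> T \<Longrightarrow> k + j \<in> U"
  shows "concentrated r U (a * b)"
  unfolding concentrated_def
proof (intro allI impI)
  fix m assume m: "m \<notin> U"
  have "hcomp r m (a * b) = (\<Sum>k\<in>wt r ` Poly_Mapping.keys a. \<Sum>j\<in>wt r ` Poly_Mapping.keys b.
          if k + j = m then hcomp r k a * hcomp r j b else 0)"
    by (rule hcomp_mult) auto
  also have "\<dots> \<in> su0_ideal"
  proof (intro su0_ideal_sum)
    fix k j
    have "k + j = m \<Longrightarrow> k \<notin> S \<or> j \<notin> T" using ST m by blast
    then show "(if k + j = m then hcomp r k a * hcomp r j b else 0) \<in> su0_ideal"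
      using a b by (auto simp: concentrated_def intro: su0_ideal_mult_left su0_ideal_mult_right su0_ideal.zero)
  qed
  finally show "hcomp r m (a * b) \<in> su0_ideal" .
qed

lemma hcomp_mult_concentrated_0:
  assumes "concentrated r {0} b"
  shows "hcomp r m (b * a) - b * hcomp r m a \<in> su0_ideal"
proof -
  let ?b0 = "hcomp r 0 b"
  let ?K = "insert 0 (wt r ` Poly_Mapping.keys b)"
  have "(\<Sum>k\<in>?K. hcomp r k b) = b"
    by (rule sum_hcomp) auto
  then have "b - ?b0 = (\<Sum>k\<in>?K - {0}. hcomp r k b)"
    using sum.remove[of ?K 0 "\<lambda>k. hcomp r k b"] by (simp add: diff_eq_eq add.commute)
  also have "\<dots> \<in> su0_ideal"
    using assms by (auto simp: concentrated_def intro!: su0_ideal_sum)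
  finally have b0: "b - ?b0 \<in> su0_ideal" .
  have "hcomp r m (?b0 * a) = ?b0 * hcomp r m a"
    using hcomp_homog_mult[OF homog_hcomp[of r 0 b], of m a] by simp
  then have "hcomp r m (b * a) - b * hcomp r m a = hcomp r m ((b - ?b0) * a) - (b - ?b0) * hcomp r m a"
    by (simp add: algebra_simps hcomp_add hcomp_diff)
  also have "\<dots> \<in> su0_ideal"
    by (rule su0_ideal_diff[OF hcomp_su0_ideal]; rule su0_ideal_mult_right[OF b0])
  finally show ?thesis .
qed

lemma zero_in_Lset: "0 \<in> Lset p r"
  by (simp add: Lset_iff_concentrated concentrated_su0_ideal su0_ideal.zero)

lemma Lset_add: "a \<in> Lset p r \<Longrightarrow> b \<in> Lset p r \<Longrightarrow> a + b \<in> Lset p r"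
  by (simp add: Lset_iff_concentrated concentrated_add)

lemma Lset_fsmul: "a \<in> Lset p r \<Longrightarrow> fsmul c a \<in> Lset p r"
  by (simp add: Lset_iff_concentrated concentrated_fsmul)

lemma Lset_sum: "(\<And>i. i \<in> S \<Longrightarrow> f i \<in> Lset p r) \<Longrightarrow> (\<Sum>i\<in>S. f i) \<in> Lset p r"
  by (simp add: Lset_iff_concentrated concentrated_sum)

lemma Lset_sum_list: "(\<And>i. i \<in> set xs \<Longrightarrow> f i \<in> Lset p r) \<Longrightarrow> sum_list (map f xs) \<in> Lset p r"
  by (induction xs) (auto intro: Lset_add zero_in_Lset)

lemma Lset_mult: "a \<in> Lset p r \<Longrightarrow> b \<in> Lset p r \<Longrightarrow> a * b \<in> Lset p r"
  unfolding Lset_iff_concentrated by (erule concentrated_mult) auto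

lemma su0_ideal_subset_Lset: "a \<in> su0_ideal \<Longrightarrow> a \<in> Lset p r"
  by (simp add: Lset_iff_concentrated concentrated_su0_ideal)

lemma hcomp_in_Lset: "hcomp r (int p * n) a \<in> Lset p r"
  unfolding Lset_iff_concentrated by (rule concentrated_homog[OF homog_hcomp]) simp

lemma Ldeg_subset_Lset: "a \<in> Ldeg p r n \<Longrightarrow> a \<in> Lset p r"
  unfolding Lset_iff_concentrated Ldeg_iff_concentrated by (erule concentrated_mono) auto

lemma zero_in_WPset: "0 \<in> WPset p r"
  by (simp add: WPset_iff_concentrated concentrated_su0_ideal su0_ideal.zero)

lemma WPset_subset_Lset: "a \<in> WPset p r \<Longrightarrow> a \<in> Lset p r"
  unfolding WPset_def by (rule Ldeg_subset_Lset)

lemma WPset_mult_Ldeg: "b \<in> WPset p r \<Longrightarrow> a \<in> Ldeg p r n \<Longrightarrow> b * a \<in> Ldeg p r n"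
  unfolding WPset_iff_concentrated Ldeg_iff_concentrated by (erule concentrated_mult) auto

lemma Ldeg_mult_homog: "a \<in> Ldeg p r n \<Longrightarrow> homog r (- int p * n) c \<Longrightarrow> a * c \<in> WPset p r"
  unfolding WPset_iff_concentrated Ldeg_iff_concentrated
  by (erule concentrated_mult[OF _ concentrated_homog]) auto

lemma hcomp_in_Ldeg: "hcomp r (int p * n) a \<in> Ldeg p r n"
  unfolding Ldeg_iff_concentrated by (rule concentrated_homog[OF homog_hcomp]) simp

lemma homog_in_Ldeg: "homog r (int p * n) a \<Longrightarrow> a \<in> Ldeg p r n"
  unfolding Ldeg_iff_concentrated by (erule concentrated_homog) simp

section \<open>A partition of unity in every weight\<close>

lemma su0_rel_beta_alpha: "mon [Be, Al] \<in> su0_ideal"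
  using su0_ideal.rel[of "fmul (fgen Be) (fgen Al)"]
  by (simp add: su0_relators_def fgen_eq_mon fmul_eq_times mon_mult)

lemma su0_rel_alphastar_alpha: "mon [Alst, Al] - 1 \<in> su0_ideal"
  using su0_ideal.rel[of "fmul (fgen Alst) (fgen Al) - fone"]
  by (simp add: su0_relators_def fgen_eq_mon fmul_eq_times fone_eq_one mon_mult)

lemma su0_rel_unit: "mon [Al, Alst] + mon [Be, Best] - 1 \<in> su0_ideal"
  using su0_ideal.rel[of "fmul (fgen Al) (fgen Alst) + fmul (fgen Be) (fgen Best) - fone"]
  by (simp add: su0_relators_def fgen_eq_mon fmul_eq_times fone_eq_one mon_mult)

lemma alphastar_pow_alpha_pow: "mon (replicate k Alst @ replicate k Al) - 1 \<in> su0_ideal"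
proof (induction k)
  case 0
  then show ?case by (simp add: mon_Nil su0_ideal.zero)
next
  case (Suc k)
  have e: "replicate (Suc k) Alst @ replicate (Suc k) Al = replicate k Alst @ [Alst, Al] @ replicate k Al"
    by (simp flip: replicate_append_same)
  have "mon (replicate (Suc k) Alst @ replicate (Suc k) Al) - mon (replicate k Alst) * 1 * mon (replicate k Al)
      \<in> su0_ideal"
    unfolding e mon_mult[symmetric] mult.assoc[symmetric] using su0_ideal_sandwich[OF su0_rel_alphastar_alpha] .
  then show ?case using Suc.IH by (simp add: mon_mult su0_ideal_trans)
qed

lemma beta_beta_betastar: "mon [Be, Be, Best] - mon [Be] \<in> su0_ideal"
proof -
  have "mon [Be] * (mon [Al, Alst] + mon [Be, Best] - 1) - mon [Be, Al] * mon [Alst] \<in> su0_ideal"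
    by (intro su0_ideal_diff su0_ideal_mult_left su0_ideal_mult_right su0_rel_unit su0_rel_beta_alpha)
  then show ?thesis by (simp add: algebra_simps mon_mult)
qed

lemma beta_pow_betastar_pow:
  "1 \<le> M \<Longrightarrow> mon (replicate M Be @ replicate M Best) - mon [Be, Best] \<in> su0_ideal"
proof (induction M rule: dec_induct)
  case base
  then show ?case by (simp add: su0_ideal.zero)
next
  case (step M)
  have "replicate (Suc M) Be @ replicate (Suc M) Best = [Be] @ (replicate M Be @ replicate M Best) @ [Best]"
    by (simp flip: replicate_append_same)
  then have "mon (replicate (Suc M) Be @ replicate (Suc M) Best) - mon [Be] * mon [Be, Best] * mon [Best]
      \<in> su0_ideal"
    using su0_ideal_sandwich[OF step.IH, of "mon [Be]" "mon [Best]"] by (simp add: mon_mult mult.assoc)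
  moreover have "mon [Be, Be, Best] * mon [Best] - mon [Be] * mon [Best] \<in> su0_ideal"
    using su0_ideal_sandwich[OF beta_beta_betastar, of 1 "mon [Best]"] by simp
  ultimately show ?case by (simp add: su0_ideal_trans mon_mult)
qed

lemma unit_telescope:
  "1 - (mon (replicate M Al @ replicate M Alst)
        + (\<Sum>k<M. mon (replicate k Al @ [Be, Best] @ replicate k Alst))) \<in> su0_ideal"
proof (induction M)
  case 0
  then show ?case by (simp add: mon_Nil su0_ideal.zero)
next
  case (Suc M)
  let ?a = "mon (replicate M Al)" and ?a' = "mon (replicate M Alst)"
  have "?a * (mon [Al, Alst] + mon [Be, Best]) * ?a' - ?a * 1 * ?a' \<in> su0_ideal"
    using su0_ideal_sandwich[OF su0_rel_unit] by simp
  moreover have "mon (replicate (Suc M) Al @ replicate (Suc M) Alst) = ?a * mon [Al, Alst] * ?a'"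
    by (simp add: mon_mult flip: replicate_append_same)
  ultimately have "mon (replicate (Suc M) Al @ replicate (Suc M) Alst)
      + mon (replicate M Al @ [Be, Best] @ replicate M Alst) - mon (replicate M Al @ replicate M Alst) \<in> su0_ideal"
    by (simp add: mon_mult algebra_simps)
  from su0_ideal_diff[OF Suc.IH this] show ?case
    by (simp add: algebra_simps)
qed

lemma collapse_negative_summand:
  assumes "1 \<le> M"
  shows "mon ((replicate k Al @ replicate M Be @ replicate e Alst) @ (replicate e Al @ replicate M Best @ replicate k Alst))
         - mon (replicate k Al @ [Be, Best] @ replicate k Alst) \<in> su0_ideal"
proof (rule su0_ideal_trans)
  show "mon ((replicate k Al @ replicate M Be @ replicate e Alst) @ (replicate e Al @ replicate M Best @ replicate k Alst))
     - mon (replicate k Al @ replicate M Be) * 1 * mon (replicate M Best @ replicate k Alst) \<in> su0_ideal"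
    using su0_ideal_sandwich[OF alphastar_pow_alpha_pow, of "mon (replicate k Al @ replicate M Be)" e
        "mon (replicate M Best @ replicate k Alst)"]
    by (simp add: mon_mult mult.assoc)
  show "mon (replicate k Al @ replicate M Be) * 1 * mon (replicate M Best @ replicate k Alst)
     - mon (replicate k Al @ [Be, Best] @ replicate k Alst) \<in> su0_ideal"
    using su0_ideal_sandwich[OF beta_pow_betastar_pow[OF assms], of "mon (replicate k Al)" "mon (replicate k Alst)"]
    by (simp add: mon_mult mult.assoc)
qed

definition unity_pairs :: "nat \<Rightarrow> int \<Rightarrow> (gen list \<times> gen list) list" where
  "unity_pairs r m =
    (if 0 \<le> m then [(replicate (nat m) Alst, replicate (nat m) Al)]
     else (replicate (nat (-m)) Al, replicate (nat (-m)) Alst) #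
       map (\<lambda>k. (replicate k Al @ replicate (nat (-m)) Be @ replicate ((r - 1) * nat (-m) + k) Alst,
                 replicate ((r - 1) * nat (-m) + k) Al @ replicate (nat (-m)) Best @ replicate k Alst))
         [0..<nat (-m)])"

lemma unity_pairs_wt:
  assumes "0 < r" "cd \<in> set (unity_pairs r m)"
  shows "wt r (fst cd) = - m" "wt r (snd cd) = m"
proof -
  have "int ((r - 1) * nat (-m) + k) = (int r - 1) * (- m) + int k" if "m < 0" for k
    using assms(1) that by (simp add: of_nat_diff)
  then have "wt r (fst cd) = - m \<and> wt r (snd cd) = m"
    using assms(2) by (cases "0 \<le> m") (auto simp: unity_pairs_def algebra_simps)
  then show "wt r (fst cd) = - m" "wt r (snd cd) = m" by auto
qed

lemma sum_unity_pairs: "sum_list (map (\<lambda>cd. mon (fst cd) * mon (snd cd)) (unity_pairs r m)) - 1 \<in> su0_ideal"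
proof (cases "0 \<le> m")
  case True
  then show ?thesis using alphastar_pow_alpha_pow[of "nat m"] by (simp add: unity_pairs_def mon_mult)
next
  case False
  define M where "M = nat (-m)"
  have M: "1 \<le> M" using False by (simp add: M_def)
  define x where "x k = replicate k Al @ replicate M Be @ replicate ((r - 1) * M + k) Alst" for k
  define y where "y k = replicate ((r - 1) * M + k) Al @ replicate M Best @ replicate k Alst" for k
  have "sum_list (map (\<lambda>cd. mon (fst cd) * mon (snd cd)) (unity_pairs r m))
      = mon (replicate M Al @ replicate M Alst) + (\<Sum>k<M. mon (x k @ y k))"
    using False unfolding unity_pairs_def M_def[symmetric] x_def[symmetric] y_def[symmetric]
    by (simp add: mon_mult o_def sum_list_distinct_conv_sum_set atLeast0LessThan[symmetric]
        del: replicate_append_same)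
  moreover have "(\<Sum>k<M. mon (x k @ y k)) - (\<Sum>k<M. mon (replicate k Al @ [Be, Best] @ replicate k Alst))
      \<in> su0_ideal"
    unfolding sum_subtractf[symmetric] x_def y_def by (intro su0_ideal_sum collapse_negative_summand M)
  ultimately have "sum_list (map (\<lambda>cd. mon (fst cd) * mon (snd cd)) (unity_pairs r m))
      - (mon (replicate M Al @ replicate M Alst) + (\<Sum>k<M. mon (replicate k Al @ [Be, Best] @ replicate k Alst)))
      \<in> su0_ideal"
    by (simp add: algebra_simps)
  then show ?thesis using su0_ideal_trans su0_ideal_sym[OF unit_telescope] by blast
qed

lemma lookup_tsmul: "Poly_Mapping.lookup (tsmul c t) k = c * Poly_Mapping.lookup t k"
  by (simp add: tsmul_def Poly_Mapping.map.rep_eq when_def)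

lemma tsmul_0_left [simp]: "tsmul 0 t = 0"
  by (rule poly_mapping_eqI) (simp add: lookup_tsmul)

lemma tsmul_0_right [simp]: "tsmul c 0 = 0"
  by (rule poly_mapping_eqI) (simp add: lookup_tsmul)

lemma tsmul_add: "tsmul c (s + t) = tsmul c s + tsmul c t"
  by (rule poly_mapping_eqI) (simp add: lookup_tsmul lookup_add algebra_simps)

lemma tsmul_diff: "tsmul c (s - t) = tsmul c s - tsmul c t"
  by (rule poly_mapping_eqI) (simp add: lookup_tsmul lookup_minus algebra_simps)

lemma tsmul_minus_one: "tsmul (-1) t = - t"
  by (rule poly_mapping_eqI) (simp add: lookup_tsmul)

lemma tsmul_sum: "tsmul c (\<Sum>i\<in>I. f i) = (\<Sum>i\<in>I. tsmul c (f i))"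
  by (rule poly_mapping_eqI) (simp add: lookup_tsmul lookup_sum sum_distrib_left)

lemma tsmul_sum_list: "tsmul c (sum_list (map f xs)) = sum_list (map (\<lambda>i. tsmul c (f i)) xs)"
  by (induction xs) (simp_all add: tsmul_add)

lemma tsmul_single: "tsmul c (Poly_Mapping.single k a) = Poly_Mapping.single k (c * a)"
  by (rule poly_mapping_eqI) (simp add: lookup_tsmul lookup_single when_def)

lemma ftens_sum_tsingle:
  "t = (\<Sum>k\<in>Poly_Mapping.keys t. tsmul (Poly_Mapping.lookup t k) (tsingle (fst k) (snd k)))"
  using poly_mapping_sum_single[of t] by (simp add: tsingle_def tsmul_single)

lemma keys_sum_list: "Poly_Mapping.keys (sum_list (map f xs)) \<subseteq> (\<Union>i\<in>set xs. Poly_Mapping.keys (f i))"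
  by (induction xs) (auto dest!: keys_add[THEN subsetD])

lemma Tform_mono: "t \<in> Tform X Y \<Longrightarrow> X \<subseteq> X' \<Longrightarrow> Y \<subseteq> Y' \<Longrightarrow> t \<in> Tform X' Y'"
  by (auto simp: Tform_def)

lemma Tform_sum: "(\<And>i. i \<in> I \<Longrightarrow> f i \<in> Tform X Y) \<Longrightarrow> (\<Sum>i\<in>I. f i) \<in> Tform X Y"
  unfolding Tform_def using keys_sum[of f I] by fast

lemma tens_rel_uminus: "s \<in> tens_rel R X Y \<Longrightarrow> - s \<in> tens_rel R X Y"
  using tens_rel.smul[of s R X Y "-1"] by (simp add: tsmul_minus_one)

lemma tens_rel_diff: "s \<in> tens_rel R X Y \<Longrightarrow> t \<in> tens_rel R X Y \<Longrightarrow> s - t \<in> tens_rel R X Y"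
  unfolding diff_conv_add_uminus by (intro tens_rel.add tens_rel_uminus)

lemma tens_rel_trans: "a - b \<in> tens_rel R X Y \<Longrightarrow> b - c \<in> tens_rel R X Y \<Longrightarrow> a - c \<in> tens_rel R X Y"
  using tens_rel.add[of "a - b" R X Y "b - c"] by simp

lemma tens_rel_sym: "a - b \<in> tens_rel R X Y \<Longrightarrow> b - a \<in> tens_rel R X Y"
  using tens_rel_uminus[of "a - b"] by simp

lemma tens_rel_replace:
  "a - a' \<in> tens_rel R X Y \<Longrightarrow> b - b' \<in> tens_rel R X Y \<Longrightarrow> a' - b' \<in> tens_rel R X Y
    \<Longrightarrow> a - b \<in> tens_rel R X Y"
  using tens_rel_trans[OF tens_rel_trans[of a a' R X Y b'] tens_rel_sym[of b b']] by blast

lemma tens_rel_sum: "(\<And>i. i \<in> A \<Longrightarrow> f i \<in> tens_rel R X Y) \<Longrightarrow> (\<Sum>i\<in>A. f i) \<in> tens_rel R X Y"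
  by (induction A rule: infinite_finite_induct) (auto intro: tens_rel.zero tens_rel.add)

lemma tens_rel_sum_list:
  "(\<And>i. i \<in> set xs \<Longrightarrow> f i \<in> tens_rel R X Y) \<Longrightarrow> sum_list (map f xs) \<in> tens_rel R X Y"
  by (induction xs) (auto intro: tens_rel.zero tens_rel.add)

lemma tens_rel_tsmul: "a - b \<in> tens_rel R X Y \<Longrightarrow> tsmul c a - tsmul c b \<in> tens_rel R X Y"
  using tens_rel.smul[of "a - b" R X Y c] by (simp add: tsmul_diff)

lemma tsingle_zero_left: "0 \<in> X \<Longrightarrow> y \<in> Y \<Longrightarrow> tsingle 0 y \<in> tens_rel R X Y"
  using tens_rel.scl[where x = 0 and y = y and c = 0 and R = R and X = X and Y = Y] by simp

lemma tsingle_zero_right: "x \<in> X \<Longrightarrow> 0 \<in> Y \<Longrightarrow> tsingle x 0 \<in> tens_rel R X Y"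
  using tens_rel.scr[where x = x and y = 0 and c = 0 and R = R and X = X and Y = Y] by simp

lemma tsingle_sum_right:
  assumes "0 \<in> Y" "\<And>a b. a \<in> Y \<Longrightarrow> b \<in> Y \<Longrightarrow> a + b \<in> Y" "x \<in> X" "\<And>i. i \<in> A \<Longrightarrow> f i \<in> Y"
  shows "tsingle x (\<Sum>i\<in>A. f i) - (\<Sum>i\<in>A. tsingle x (f i)) \<in> tens_rel R X Y"
  using assms(4)
proof (induction A rule: infinite_finite_induct)
  case (insert a A)
  have "(\<Sum>i\<in>A. f i) \<in> Y"
    using insert.prems assms(1,2) by (induction A rule: infinite_finite_induct) auto
  then have "tsingle x (f a + (\<Sum>i\<in>A. f i)) - tsingle x (f a) - tsingle x (\<Sum>i\<in>A. f i) \<in> tens_rel R X Y"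
    using insert.prems assms(3) by (intro tens_rel.addr) auto
  from tens_rel.add[OF this insert.IH] show ?case
    using insert.hyps insert.prems by (simp add: algebra_simps)
qed (use tsingle_zero_right[OF assms(3,1)] in simp_all)

lemma tsingle_sum_list_right:
  assumes "0 \<in> Y" "\<And>a b. a \<in> Y \<Longrightarrow> b \<in> Y \<Longrightarrow> a + b \<in> Y" "x \<in> X" "\<And>i. i \<in> set xs \<Longrightarrow> f i \<in> Y"
  shows "tsingle x (sum_list (map f xs)) - sum_list (map (\<lambda>i. tsingle x (f i)) xs) \<in> tens_rel R X Y"
  using assms(4)
proof (induction xs)
  case (Cons a xs)
  have "sum_list (map f xs) \<in> Y"
    using Cons.prems assms(1,2) by (induction xs) auto
  then have "tsingle x (f a + sum_list (map f xs)) - tsingle x (f a) - tsingle x (sum_list (map f xs))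
      \<in> tens_rel R X Y"
    using Cons.prems assms(3) by (intro tens_rel.addr) auto
  from tens_rel.add[OF this Cons.IH] show ?case
    using Cons.prems by (simp add: algebra_simps)
qed (use tsingle_zero_right[OF assms(3,1)] in simp)

lemma fsmul_one [simp]: "fsmul 1 x = x"
  by (simp add: fsmul_eq_times mon_Nil[unfolded mon_def])

lemma coeff_additive_fsmul: "coeff_additive (\<lambda>k c. fsmul c (f k))"
  by (simp add: coeff_additive_def fsmul_eq_times single_add distrib_right)

lemma coeff_additive_single: "coeff_additive (\<lambda>k c. Poly_Mapping.single (f k) c)"
  by (simp add: coeff_additive_def single_add)

lemma can_map_eq_coeff_sum:
  "can_map p r t n = coeff_sum (\<lambda>k c. fsmul c (fst k * hcomp r (int p * n) (snd k))) t"
  by (simp add: can_map_def coeff_sum_def case_prod_beta fmul_eq_times)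

lemma tmult_eq_coeff_sum: "tmult t = coeff_sum (\<lambda>k c. fsmul c (fst k * snd k)) t"
  by (simp add: tmult_def coeff_sum_def case_prod_beta fmul_eq_times)

lemma tlmul_eq_coeff_sum: "tlmul b t = coeff_sum (\<lambda>k c. Poly_Mapping.single (b * fst k, snd k) c) t"
  by (simp add: tlmul_def coeff_sum_def case_prod_beta fmul_eq_times)

lemma can_map_tsingle: "can_map p r (tsingle x y) n = x * hcomp r (int p * n) y"
  by (simp add: can_map_eq_coeff_sum tsingle_def coeff_sum_single coeff_additive_fsmul)

lemma tmult_tsingle: "tmult (tsingle x y) = x * y"
  by (simp add: tmult_eq_coeff_sum tsingle_def coeff_sum_single coeff_additive_fsmul)

lemma tlmul_tsingle: "tlmul b (tsingle x y) = tsingle (b * x) y"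
  by (simp add: tlmul_eq_coeff_sum tsingle_def coeff_sum_single coeff_additive_single)

lemma can_map_sum: "can_map p r (\<Sum>i\<in>I. f i) n = (\<Sum>i\<in>I. can_map p r (f i) n)"
  unfolding can_map_eq_coeff_sum by (rule coeff_sum_sum[OF coeff_additive_fsmul])

lemma can_map_sum_list:
  "can_map p r (sum_list (map f xs)) n = sum_list (map (\<lambda>i. can_map p r (f i) n) xs)"
  unfolding can_map_eq_coeff_sum by (rule coeff_sum_sum_list[OF coeff_additive_fsmul])

lemma tmult_sum: "tmult (\<Sum>i\<in>I. f i) = (\<Sum>i\<in>I. tmult (f i))"
  unfolding tmult_eq_coeff_sum by (rule coeff_sum_sum[OF coeff_additive_fsmul])

lemma tmult_sum_list: "tmult (sum_list (map f xs)) = sum_list (map (\<lambda>i. tmult (f i)) xs)"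
  unfolding tmult_eq_coeff_sum by (rule coeff_sum_sum_list[OF coeff_additive_fsmul])

lemma tlmul_sum: "tlmul b (\<Sum>i\<in>I. f i) = (\<Sum>i\<in>I. tlmul b (f i))"
  unfolding tlmul_eq_coeff_sum by (rule coeff_sum_sum[OF coeff_additive_single])

lemma tlmul_sum_list: "tlmul b (sum_list (map f xs)) = sum_list (map (\<lambda>i. tlmul b (f i)) xs)"
  unfolding tlmul_eq_coeff_sum by (rule coeff_sum_sum_list[OF coeff_additive_single])

text \<open>\<open>transl p r n h\<close> is \<open>h\<close> times the translation map \<open>\<Sum>\<^sub>i c\<^sub>i \<otimes> d\<^sub>i\<close> of degree \<open>n\<close>, built from the
  partition of unity in weight \<open>p n\<close>.\<close>

definition transl :: "nat \<Rightarrow> nat \<Rightarrow> int \<Rightarrow> falg \<Rightarrow> ftens" where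
  "transl p r n h =
     sum_list (map (\<lambda>cd. tsingle (h * mon (fst cd)) (mon (snd cd))) (unity_pairs r (int p * n)))"

definition transl_left :: "nat \<Rightarrow> nat \<Rightarrow> int \<Rightarrow> falg \<Rightarrow> falg set" where
  "transl_left p r n h = (\<lambda>cd. h * mon (fst cd)) ` set (unity_pairs r (int p * n))"

lemma transl_leftD:
  "transl_left p r n h \<subseteq> X \<Longrightarrow> cd \<in> set (unity_pairs r (int p * n)) \<Longrightarrow> h * mon (fst cd) \<in> X"
  by (auto simp: transl_left_def)

lemma tmult_transl_eq:
  "tmult (transl p r n h) = sum_list (map (\<lambda>cd. h * mon (fst cd) * mon (snd cd)) (unity_pairs r (int p * n)))"
  by (simp add: transl_def tmult_sum_list tmult_tsingle)

lemma tmult_transl: "tmult (transl p r n h) - h \<in> su0_ideal"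
proof -
  have "tmult (transl p r n h) - h
      = h * (sum_list (map (\<lambda>cd. mon (fst cd) * mon (snd cd)) (unity_pairs r (int p * n))) - 1)"
    by (simp add: tmult_transl_eq algebra_simps sum_list_const_mult o_def)
  also have "\<dots> \<in> su0_ideal"
    by (rule su0_ideal_mult_left[OF sum_unity_pairs])
  finally show ?thesis .
qed

lemma tlmul_transl: "tlmul b (transl p r n h) = transl p r n (b * h)"
  by (simp add: transl_def tlmul_sum_list tlmul_tsingle mult.assoc)

locale quantum_lens_space =
  fixes p r :: nat
  assumes p_pos: "0 < p" and r_pos: "0 < r"
begin

lemma mon_snd_unity_pairs_in_Ldeg: "cd \<in> set (unity_pairs r (int p * n)) \<Longrightarrow> mon (snd cd) \<in> Ldeg p r n"
  using unity_pairs_wt[OF r_pos] by (intro homog_in_Ldeg homog_mon) auto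

lemma mon_snd_unity_pairs_in_Lset: "cd \<in> set (unity_pairs r (int p * n)) \<Longrightarrow> mon (snd cd) \<in> Lset p r"
  by (rule Ldeg_subset_Lset[OF mon_snd_unity_pairs_in_Ldeg])

lemma transl_left_Lset: "h \<in> Lset p r \<Longrightarrow> transl_left p r n h \<subseteq> Lset p r"
proof (unfold transl_left_def, rule image_subsetI)
  fix cd assume h: "h \<in> Lset p r" and cd: "cd \<in> set (unity_pairs r (int p * n))"
  have "homog r (- (int p * n)) (mon (fst cd))"
    using unity_pairs_wt(1)[OF r_pos cd] by (intro homog_mon)
  then have "mon (fst cd) \<in> Lset p r"
    unfolding Lset_iff_concentrated by (rule concentrated_homog) simp
  with h show "h * mon (fst cd) \<in> Lset p r" by (rule Lset_mult)
qed

lemma transl_left_WPset: "h \<in> Ldeg p r n \<Longrightarrow> transl_left p r n h \<subseteq> WPset p r"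
  unfolding transl_left_def using unity_pairs_wt(1)[OF r_pos]
  by (auto intro!: Ldeg_mult_homog homog_mon)

lemma transl_Tform:
  assumes "transl_left p r n h \<subseteq> X"
  shows "transl p r n h \<in> Tform X (Ldeg p r n)"
proof -
  have "Poly_Mapping.keys (transl p r n h)
      \<subseteq> (\<Union>cd\<in>set (unity_pairs r (int p * n)). Poly_Mapping.keys (tsingle (h * mon (fst cd)) (mon (snd cd))))"
    unfolding transl_def by (rule keys_sum_list)
  also have "\<dots> \<subseteq> X \<times> Ldeg p r n"
    using transl_leftD[OF assms] mon_snd_unity_pairs_in_Ldeg by (auto simp: tsingle_def)
  finally show ?thesis by (simp add: Tform_def)
qed

lemma transl_add:
  assumes "transl_left p r n h \<subseteq> X" "transl_left p r n h' \<subseteq> X"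
  shows "transl p r n (h + h') - transl p r n h - transl p r n h' \<in> tens_rel R X (Lset p r)"
proof -
  have "tsingle ((h + h') * mon (fst cd)) (mon (snd cd)) - tsingle (h * mon (fst cd)) (mon (snd cd))
      - tsingle (h' * mon (fst cd)) (mon (snd cd)) \<in> tens_rel R X (Lset p r)"
    if "cd \<in> set (unity_pairs r (int p * n))" for cd
    using tens_rel.addl[OF transl_leftD[OF assms(1) that] transl_leftD[OF assms(2) that]
        mon_snd_unity_pairs_in_Lset[OF that]]
    by (simp add: distrib_right)
  then show ?thesis
    unfolding transl_def sum_list_subtractf[symmetric] by (intro tens_rel_sum_list) simp
qed

lemma transl_fsmul:
  assumes "transl_left p r n h \<subseteq> X"
  shows "transl p r n (fsmul c h) - tsmul c (transl p r n h) \<in> tens_rel R X (Lset p r)"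
proof -
  have "tsingle (fsmul c h * mon (fst cd)) (mon (snd cd)) - tsmul c (tsingle (h * mon (fst cd)) (mon (snd cd)))
      \<in> tens_rel R X (Lset p r)"
    if "cd \<in> set (unity_pairs r (int p * n))" for cd
    using tens_rel.scl[OF transl_leftD[OF assms that] mon_snd_unity_pairs_in_Lset[OF that]]
    by (simp add: fsmul_eq_times mult.assoc)
  then show ?thesis
    unfolding transl_def tsmul_sum_list sum_list_subtractf[symmetric] by (intro tens_rel_sum_list) simp
qed

lemma transl_cong:
  assumes "h - h' \<in> su0_ideal" "transl_left p r n h \<subseteq> X" "transl_left p r n h' \<subseteq> X"
  shows "transl p r n h - transl p r n h' \<in> tens_rel R X (Lset p r)"
proof -
  have "tsingle (h * mon (fst cd)) (mon (snd cd)) - tsingle (h' * mon (fst cd)) (mon (snd cd))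
      \<in> tens_rel R X (Lset p r)"
    if "cd \<in> set (unity_pairs r (int p * n))" for cd
    using su0_ideal_mult_right[OF assms(1), of "mon (fst cd)"]
    by (intro tens_rel.eql transl_leftD[OF assms(2) that] transl_leftD[OF assms(3) that]
        mon_snd_unity_pairs_in_Lset[OF that]) (simp add: algebra_simps)
  then show ?thesis
    unfolding transl_def sum_list_subtractf[symmetric] by (intro tens_rel_sum_list) simp
qed

lemma transl_zero: "0 \<in> X \<Longrightarrow> transl p r n 0 \<in> tens_rel R X (Lset p r)"
  unfolding transl_def using mon_snd_unity_pairs_in_Lset
  by (auto intro!: tens_rel_sum_list tsingle_zero_left)

lemma transl_in_tens_rel:
  assumes "h \<in> su0_ideal" "0 \<in> X" "transl_left p r n h \<subseteq> X"
  shows "transl p r n h \<in> tens_rel R X (Lset p r)"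
proof -
  have "transl p r n 0 \<in> tens_rel R X (Lset p r)"
    using assms(2) by (rule transl_zero)
  moreover have "transl p r n h - transl p r n 0 \<in> tens_rel R X (Lset p r)"
    using assms by (intro transl_cong) (auto simp: transl_left_def)
  ultimately show ?thesis
    using tens_rel.add by fastforce
qed

lemma can_map_transl: "can_map p r (transl p r n h) n' - (if n' = n then h else 0) \<in> su0_ideal"
proof -
  have "hcomp r (int p * n') (mon (snd cd)) = (if n' = n then mon (snd cd) else 0)"
    if "cd \<in> set (unity_pairs r (int p * n))" for cd
    using unity_pairs_wt(2)[OF r_pos that] p_pos by (auto simp: mon_def hcomp_single)
  then have "can_map p r (transl p r n h) n' = (if n' = n then tmult (transl p r n h) else 0)"
    by (auto simp: transl_def can_map_sum_list tmult_sum_list can_map_tsingle tmult_tsingle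
        intro!: sum_list_0 cong: map_cong)
  then show ?thesis
    using tmult_transl by (simp add: su0_ideal.zero)
qed

end

section \<open>Bijectivity of the canonical map\<close>

definition degrees :: "nat \<Rightarrow> nat \<Rightarrow> falg \<Rightarrow> int set" where
  "degrees p r y = {n. \<exists>w\<in>Poly_Mapping.keys y. wt r w = int p * n}"

lemma hcomp_eq_0_if_not_degree: "n \<notin> degrees p r y \<Longrightarrow> hcomp r (int p * n) y = 0"
  by (rule hcomp_eq_0) (auto simp: degrees_def)

context quantum_lens_space
begin

lemma finite_degrees: "finite (degrees p r y)"
proof (rule finite_subset)
  show "degrees p r y \<subseteq> (\<lambda>w. wt r w div int p) ` Poly_Mapping.keys y"
    using p_pos by (force simp: degrees_def)
qed simp

lemma sum_hcomp_degrees: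
  assumes y: "y \<in> Lset p r" and F: "finite F" "degrees p r y \<subseteq> F"
  shows "y - (\<Sum>n\<in>F. hcomp r (int p * n) y) \<in> su0_ideal"
proof -
  let ?K = "wt r ` Poly_Mapping.keys y"
  let ?K1 = "{m \<in> ?K. int p dvd m}" and ?K2 = "{m \<in> ?K. \<not> int p dvd m}"
  have "y = (\<Sum>m\<in>?K. hcomp r m y)"
    by (rule sum_hcomp[symmetric]) auto
  also have "\<dots> = (\<Sum>m\<in>?K1 \<union> ?K2. hcomp r m y)"
    by (rule sum.cong) auto
  also have "\<dots> = (\<Sum>m\<in>?K1. hcomp r m y) + (\<Sum>m\<in>?K2. hcomp r m y)"
    by (rule sum.union_disjoint) auto
  finally have split: "y = (\<Sum>m\<in>?K1. hcomp r m y) + (\<Sum>m\<in>?K2. hcomp r m y)" .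
  have "?K1 = (\<lambda>n. int p * n) ` degrees p r y"
  proof (intro equalityI subsetI)
    fix m assume m: "m \<in> ?K1"
    then obtain w where "w \<in> Poly_Mapping.keys y" "m = wt r w"
      by auto
    moreover obtain k where "m = int p * k"
      using m by (auto elim: dvdE)
    ultimately show "m \<in> (\<lambda>n. int p * n) ` degrees p r y"
      by (intro image_eqI[of _ _ k]) (auto simp: degrees_def)
  next
    fix m assume "m \<in> (\<lambda>n. int p * n) ` degrees p r y"
    then obtain n w where "m = int p * n" "w \<in> Poly_Mapping.keys y" "wt r w = int p * n"
      by (auto simp: degrees_def)
    then show "m \<in> ?K1"
      by (metis (mono_tags, lifting) dvd_triv_left image_eqI mem_Collect_eq)
  qed
  then have "(\<Sum>m\<in>?K1. hcomp r m y) = (\<Sum>n\<in>degrees p r y. hcomp r (int p * n) y)"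
    using p_pos by (simp add: sum.reindex inj_on_def)
  also have "\<dots> = (\<Sum>n\<in>F. hcomp r (int p * n) y)"
    using F by (intro sum.mono_neutral_left) (auto simp: hcomp_eq_0_if_not_degree)
  finally have "y - (\<Sum>n\<in>F. hcomp r (int p * n) y) = (\<Sum>m\<in>?K2. hcomp r m y)"
    using split by (simp add: diff_eq_eq add.commute)
  also have "\<dots> \<in> su0_ideal"
    using y by (intro su0_ideal_sum) (auto simp: Lset_def)
  finally show ?thesis .
qed

lemma tsingle_equiv_transl:
  assumes x: "x \<in> Lset p r" and h: "h \<in> Ldeg p r n"
  shows "tsingle x h - transl p r n (x * h) \<in> tens_rel (WPset p r) (Lset p r) (Lset p r)"
proof -
  let ?L = "unity_pairs r (int p * n)"
  have hcd: "h * mon (fst cd) * mon (snd cd) \<in> Lset p r" if "cd \<in> set ?L" for cd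
    by (rule Lset_mult[OF WPset_subset_Lset[OF transl_leftD[OF transl_left_WPset[OF h] that]]
          mon_snd_unity_pairs_in_Lset[OF that]])
  have unity: "tsingle x h - tsingle x (tmult (transl p r n h)) \<in> tens_rel (WPset p r) (Lset p r) (Lset p r)"
  proof (rule tens_rel.eqr[OF x Ldeg_subset_Lset[OF h]])
    show "tmult (transl p r n h) \<in> Lset p r"
      unfolding tmult_transl_eq using hcd by (rule Lset_sum_list)
    show "h - tmult (transl p r n h) \<in> su0_ideal"
      by (rule su0_ideal_sym[OF tmult_transl])
  qed
  have distrib: "tsingle x (tmult (transl p r n h)) - sum_list (map (\<lambda>cd. tsingle x (h * mon (fst cd) * mon (snd cd))) ?L)
      \<in> tens_rel (WPset p r) (Lset p r) (Lset p r)"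
    unfolding tmult_transl_eq using zero_in_Lset Lset_add x hcd by (rule tsingle_sum_list_right)
  \<comment> \<open>each \<open>h c\<^sub>i\<close> has weight 0, i.e. lies in \<open>B\<close>, so it can be moved across the tensor sign\<close>
  have balance: "sum_list (map (\<lambda>cd. tsingle x (h * mon (fst cd) * mon (snd cd))) ?L) - transl p r n (x * h)
      \<in> tens_rel (WPset p r) (Lset p r) (Lset p r)"
  proof -
    have "tsingle x (h * mon (fst cd) * mon (snd cd)) - tsingle (x * h * mon (fst cd)) (mon (snd cd))
        \<in> tens_rel (WPset p r) (Lset p r) (Lset p r)" if "cd \<in> set ?L" for cd
      using tens_rel_sym[OF tens_rel.bal[OF x transl_leftD[OF transl_left_WPset[OF h] that]
            mon_snd_unity_pairs_in_Lset[OF that]]]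
      by (simp add: fmul_eq_times mult.assoc)
    then show ?thesis
      unfolding transl_def sum_list_subtractf[symmetric] by (intro tens_rel_sum_list) simp
  qed
  show ?thesis
    by (rule tens_rel_trans[OF tens_rel_trans[OF unity distrib] balance])
qed

lemma tsingle_equiv_sum_transl:
  assumes x: "x \<in> Lset p r" and y: "y \<in> Lset p r" and F: "finite F" "degrees p r y \<subseteq> F"
  shows "tsingle x y - (\<Sum>n\<in>F. transl p r n (x * hcomp r (int p * n) y))
    \<in> tens_rel (WPset p r) (Lset p r) (Lset p r)"
proof -
  let ?N = "tens_rel (WPset p r) (Lset p r) (Lset p r)"
  have "tsingle x y - tsingle x (\<Sum>n\<in>F. hcomp r (int p * n) y) \<in> ?N"
    using sum_hcomp_degrees[OF y F] hcomp_in_Lset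
    by (intro tens_rel.eqr x y Lset_sum)
  moreover have "tsingle x (\<Sum>n\<in>F. hcomp r (int p * n) y) - (\<Sum>n\<in>F. tsingle x (hcomp r (int p * n) y)) \<in> ?N"
    using zero_in_Lset Lset_add x hcomp_in_Lset by (rule tsingle_sum_right)
  moreover have "(\<Sum>n\<in>F. tsingle x (hcomp r (int p * n) y)) - (\<Sum>n\<in>F. transl p r n (x * hcomp r (int p * n) y)) \<in> ?N"
    unfolding sum_subtractf[symmetric] using x hcomp_in_Ldeg
    by (intro tens_rel_sum tsingle_equiv_transl)
  ultimately show ?thesis
    using tens_rel_trans by blast
qed

lemma sum_tsmul_transl:
  assumes "\<And>k. k \<in> K \<Longrightarrow> h k \<in> Lset p r"
  shows "(\<Sum>k\<in>K. tsmul (c k) (transl p r n (h k))) - transl p r n (\<Sum>k\<in>K. fsmul (c k) (h k))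
    \<in> tens_rel R (Lset p r) (Lset p r)"
  using assms
proof (induction K rule: infinite_finite_induct)
  case (insert a K)
  let ?S = "\<Sum>k\<in>K. fsmul (c k) (h k)"
  have ha: "transl_left p r n (fsmul (c a) (h a)) \<subseteq> Lset p r"
    using insert.prems by (intro transl_left_Lset Lset_fsmul) simp
  have hS: "transl_left p r n ?S \<subseteq> Lset p r"
    using insert.prems by (intro transl_left_Lset Lset_sum Lset_fsmul) simp
  let ?T = "\<lambda>k. tsmul (c k) (transl p r n (h k))"
  have add: "transl p r n (fsmul (c a) (h a) + ?S) - transl p r n (fsmul (c a) (h a)) - transl p r n ?S
      \<in> tens_rel R (Lset p r) (Lset p r)"
    using ha hS by (rule transl_add)
  have smul: "transl p r n (fsmul (c a) (h a)) - ?T a \<in> tens_rel R (Lset p r) (Lset p r)"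
    using insert.prems by (intro transl_fsmul transl_left_Lset) simp
  have IH: "(\<Sum>k\<in>K. ?T k) - transl p r n ?S \<in> tens_rel R (Lset p r) (Lset p r)"
    using insert.prems by (intro insert.IH) simp
  have "((\<Sum>k\<in>K. ?T k) - transl p r n ?S)
      - (transl p r n (fsmul (c a) (h a) + ?S) - transl p r n (fsmul (c a) (h a)) - transl p r n ?S)
      - (transl p r n (fsmul (c a) (h a)) - ?T a) \<in> tens_rel R (Lset p r) (Lset p r)"
    by (rule tens_rel_diff[OF tens_rel_diff[OF IH add] smul])
  then have "(?T a + (\<Sum>k\<in>K. ?T k)) - transl p r n (fsmul (c a) (h a) + ?S) \<in> tens_rel R (Lset p r) (Lset p r)"
    by (simp add: algebra_simps)
  then show ?case
    using insert.hyps by simp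
qed (use transl_zero[OF zero_in_Lset] in \<open>auto intro: tens_rel_uminus\<close>)

lemma can_map_kernel:
  assumes t: "t \<in> Tform (Lset p r) (Lset p r)" and can: "\<forall>n. can_map p r t n \<in> su0_ideal"
  shows "t \<in> tens_rel (WPset p r) (Lset p r) (Lset p r)"
proof -
  let ?N = "tens_rel (WPset p r) (Lset p r) (Lset p r)"
  let ?K = "Poly_Mapping.keys t" and ?c = "Poly_Mapping.lookup t"
  let ?h = "\<lambda>n k. fst k * hcomp r (int p * n) (snd k)"
  have kA: "fst k \<in> Lset p r" "snd k \<in> Lset p r" if "k \<in> ?K" for k
    using t that by (auto simp: Tform_def)
  define F where "F = (\<Union>k\<in>?K. degrees p r (snd k))"
  have F: "finite F" "degrees p r (snd k) \<subseteq> F" if "k \<in> ?K" for k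
    using that finite_degrees by (auto simp: F_def)
  have "t - (\<Sum>k\<in>?K. tsmul (?c k) (\<Sum>n\<in>F. transl p r n (?h n k))) \<in> ?N"
    by (subst ftens_sum_tsingle, unfold sum_subtractf[symmetric])
       (intro tens_rel_sum tens_rel_tsmul tsingle_equiv_sum_transl kA F)
  also have "(\<Sum>k\<in>?K. tsmul (?c k) (\<Sum>n\<in>F. transl p r n (?h n k)))
      = (\<Sum>n\<in>F. \<Sum>k\<in>?K. tsmul (?c k) (transl p r n (?h n k)))"
    by (simp add: tsmul_sum sum.swap[of _ ?K])
  finally have "t - (\<Sum>n\<in>F. \<Sum>k\<in>?K. tsmul (?c k) (transl p r n (?h n k))) \<in> ?N" .
  moreover have "(\<Sum>n\<in>F. \<Sum>k\<in>?K. tsmul (?c k) (transl p r n (?h n k))) - (\<Sum>n\<in>F. transl p r n (can_map p r t n))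
      \<in> ?N"
  proof (unfold sum_subtractf[symmetric], intro tens_rel_sum)
    fix n
    have "can_map p r t n = (\<Sum>k\<in>?K. fsmul (?c k) (?h n k))"
      by (simp add: can_map_def case_prod_beta fmul_eq_times)
    moreover have "(\<Sum>k\<in>?K. tsmul (?c k) (transl p r n (?h n k))) - transl p r n (\<Sum>k\<in>?K. fsmul (?c k) (?h n k))
        \<in> ?N"
      using kA by (intro sum_tsmul_transl Lset_mult hcomp_in_Lset)
    ultimately show "(\<Sum>k\<in>?K. tsmul (?c k) (transl p r n (?h n k))) - transl p r n (can_map p r t n) \<in> ?N"
      by simp
  qed
  moreover have "(\<Sum>n\<in>F. transl p r n (can_map p r t n)) \<in> ?N"
    using can by (intro tens_rel_sum transl_in_tens_rel zero_in_Lset transl_left_Lset su0_ideal_subset_Lset) auto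
  ultimately show ?thesis
    using tens_rel_trans tens_rel.add by fastforce
qed

lemma can_map_surjective:
  assumes g: "\<forall>n. g n \<in> Lset p r" and fin: "finite {n. g n \<notin> su0_ideal}"
  shows "\<exists>t \<in> Tform (Lset p r) (Lset p r). \<forall>n. can_map p r t n - g n \<in> su0_ideal"
proof -
  define F where "F = {n. g n \<notin> su0_ideal}"
  define t where "t = (\<Sum>m\<in>F. transl p r m (g m))"
  have "t \<in> Tform (Lset p r) (Lset p r)"
    unfolding t_def using g Ldeg_subset_Lset
    by (intro Tform_sum Tform_mono[OF transl_Tform[OF transl_left_Lset]]) auto
  moreover have "can_map p r t n - g n \<in> su0_ideal" for n
  proof (rule su0_ideal_trans)
    show "can_map p r t n - (\<Sum>m\<in>F. if n = m then g m else 0) \<in> su0_ideal"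
      unfolding t_def can_map_sum sum_subtractf[symmetric] by (intro su0_ideal_sum can_map_transl)
    show "(\<Sum>m\<in>F. if n = m then g m else 0) - g n \<in> su0_ideal"
      using fin by (cases "n \<in> F") (auto simp: F_def su0_ideal.zero su0_ideal_uminus)
  qed
  ultimately show ?thesis
    by blast
qed

theorem can_bijective_L0: "can_bijective p r"
  unfolding can_bijective_def using can_map_kernel can_map_surjective by blast

end

section \<open>The splitting\<close>

definition splitting :: "nat \<Rightarrow> nat \<Rightarrow> falg \<Rightarrow> ftens" where
  "splitting p r a = (\<Sum>n\<in>degrees p r a. transl p r n (hcomp r (int p * n) a))"

context quantum_lens_space
begin

lemma transl_hcomp_left: "transl_left p r n (hcomp r (int p * n) a) \<subseteq> WPset p r"
  by (rule transl_left_WPset[OF hcomp_in_Ldeg])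

lemma sum_transl_extend:
  assumes "finite F" "G \<subseteq> F" "\<And>n. n \<in> F - G \<Longrightarrow> h n = 0"
  shows "(\<Sum>n\<in>G. transl p r n (h n)) - (\<Sum>n\<in>F. transl p r n (h n)) \<in> tens_rel {} (WPset p r) (Lset p r)"
proof -
  have "(\<Sum>n\<in>F - G. transl p r n (h n)) \<in> tens_rel {} (WPset p r) (Lset p r)"
    using assms(3) by (auto intro!: tens_rel_sum transl_zero zero_in_WPset)
  then show ?thesis
    using sum.subset_diff[OF assms(2,1), of "\<lambda>n. transl p r n (h n)"] tens_rel_uminus by fastforce
qed

lemma splitting_eq_sum:
  assumes "finite F" "degrees p r a \<subseteq> F"
  shows "splitting p r a - (\<Sum>n\<in>F. transl p r n (hcomp r (int p * n) a)) \<in> tens_rel {} (WPset p r) (Lset p r)"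
  unfolding splitting_def using assms by (intro sum_transl_extend) (auto simp: hcomp_eq_0_if_not_degree)

lemma splitting_Tform: "splitting p r a \<in> Tform (WPset p r) (Lset p r)"
  unfolding splitting_def using Ldeg_subset_Lset
  by (intro Tform_sum Tform_mono[OF transl_Tform[OF transl_hcomp_left]]) auto

lemma splitting_cong:
  assumes "a - a' \<in> su0_ideal"
  shows "splitting p r a - splitting p r a' \<in> tens_rel {} (WPset p r) (Lset p r)"
proof -
  define F where "F = degrees p r a \<union> degrees p r a'"
  have F: "finite F" by (simp add: F_def finite_degrees)
  have "(\<Sum>n\<in>F. transl p r n (hcomp r (int p * n) a)) - (\<Sum>n\<in>F. transl p r n (hcomp r (int p * n) a'))
      \<in> tens_rel {} (WPset p r) (Lset p r)"
    unfolding sum_subtractf[symmetric] using hcomp_su0_ideal[OF assms]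
    by (intro tens_rel_sum transl_cong transl_hcomp_left) (simp add: hcomp_diff)
  then show ?thesis
    by (intro tens_rel_replace[OF splitting_eq_sum[OF F] splitting_eq_sum[OF F]]) (auto simp: F_def)
qed

lemma splitting_add:
  "splitting p r (a + a') - splitting p r a - splitting p r a' \<in> tens_rel {} (WPset p r) (Lset p r)"
proof -
  define F where "F = degrees p r (a + a') \<union> degrees p r a \<union> degrees p r a'"
  have F: "finite F" by (simp add: F_def finite_degrees)
  let ?S = "\<lambda>a. \<Sum>n\<in>F. transl p r n (hcomp r (int p * n) a)"
  have sum: "?S (a + a') - ?S a - ?S a' \<in> tens_rel {} (WPset p r) (Lset p r)"
    unfolding sum_subtractf[symmetric]
    by (intro tens_rel_sum) (simp add: hcomp_add transl_add transl_hcomp_left)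
  have eq: "splitting p r b - ?S b \<in> tens_rel {} (WPset p r) (Lset p r)" if "b \<in> {a + a', a, a'}" for b
    using that by (intro splitting_eq_sum F) (auto simp: F_def)
  have "(splitting p r (a + a') - ?S (a + a')) - (splitting p r a - ?S a) - (splitting p r a' - ?S a')
      + (?S (a + a') - ?S a - ?S a') \<in> tens_rel {} (WPset p r) (Lset p r)"
    by (rule tens_rel.add[OF tens_rel_diff[OF tens_rel_diff[OF eq eq] eq] sum]) auto
  then show ?thesis
    by (simp add: algebra_simps)
qed

lemma splitting_fsmul:
  "splitting p r (fsmul c a) - tsmul c (splitting p r a) \<in> tens_rel {} (WPset p r) (Lset p r)"
proof -
  define F where "F = degrees p r a \<union> degrees p r (fsmul c a)"
  have F: "finite F" by (simp add: F_def finite_degrees)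
  have "(\<Sum>n\<in>F. transl p r n (hcomp r (int p * n) (fsmul c a)))
      - tsmul c (\<Sum>n\<in>F. transl p r n (hcomp r (int p * n) a)) \<in> tens_rel {} (WPset p r) (Lset p r)"
    unfolding tsmul_sum sum_subtractf[symmetric]
    by (intro tens_rel_sum) (simp add: hcomp_fsmul transl_fsmul transl_hcomp_left)
  then show ?thesis
    by (intro tens_rel_replace[OF splitting_eq_sum[OF F] tens_rel_tsmul[OF splitting_eq_sum[OF F]]])
       (auto simp: F_def)
qed

lemma splitting_mult_left:
  assumes b: "b \<in> WPset p r"
  shows "splitting p r (b * a) - tlmul b (splitting p r a) \<in> tens_rel {} (WPset p r) (Lset p r)"
proof -
  define F where "F = degrees p r a \<union> degrees p r (b * a)"
  have F: "finite F" by (simp add: F_def finite_degrees)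
  have "tlmul b (splitting p r a) = (\<Sum>n\<in>degrees p r a. transl p r n (b * hcomp r (int p * n) a))"
    by (simp add: splitting_def tlmul_sum tlmul_transl)
  then have lmul: "tlmul b (splitting p r a) - (\<Sum>n\<in>F. transl p r n (b * hcomp r (int p * n) a))
      \<in> tens_rel {} (WPset p r) (Lset p r)"
    using F by (simp, intro sum_transl_extend) (auto simp: F_def hcomp_eq_0_if_not_degree)
  have "(\<Sum>n\<in>F. transl p r n (hcomp r (int p * n) (b * a))) - (\<Sum>n\<in>F. transl p r n (b * hcomp r (int p * n) a))
      \<in> tens_rel {} (WPset p r) (Lset p r)"
    unfolding sum_subtractf[symmetric]
    using b[unfolded WPset_iff_concentrated]
    by (intro tens_rel_sum transl_cong hcomp_mult_concentrated_0 transl_hcomp_left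
        transl_left_WPset WPset_mult_Ldeg[OF b hcomp_in_Ldeg])
  then show ?thesis
    by (intro tens_rel_replace[OF splitting_eq_sum[OF F] lmul]) (auto simp: F_def)
qed

lemma splitting_Ldeg:
  assumes a: "a \<in> Ldeg p r n"
  shows "\<exists>t \<in> Tform (WPset p r) (Ldeg p r n). splitting p r a - t \<in> tens_rel {} (WPset p r) (Lset p r)"
proof
  define F where "F = insert n (degrees p r a)"
  have F: "finite F" by (simp add: F_def finite_degrees)
  have "(\<Sum>m\<in>F - {n}. transl p r m (hcomp r (int p * m) a)) \<in> tens_rel {} (WPset p r) (Lset p r)"
    using a p_pos by (intro tens_rel_sum transl_in_tens_rel zero_in_WPset transl_hcomp_left) (auto simp: Ldeg_def)
  then have "(\<Sum>m\<in>F. transl p r m (hcomp r (int p * m) a)) - transl p r n (hcomp r (int p * n) a)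
      \<in> tens_rel {} (WPset p r) (Lset p r)"
    using sum.remove[OF F, of n "\<lambda>m. transl p r m (hcomp r (int p * m) a)"] by (simp add: F_def)
  then show "splitting p r a - transl p r n (hcomp r (int p * n) a) \<in> tens_rel {} (WPset p r) (Lset p r)"
    by (intro tens_rel_trans[OF splitting_eq_sum[OF F]]) (auto simp: F_def)
  show "transl p r n (hcomp r (int p * n) a) \<in> Tform (WPset p r) (Ldeg p r n)"
    by (rule transl_Tform[OF transl_hcomp_left])
qed

lemma tmult_splitting:
  assumes "a \<in> Lset p r"
  shows "tmult (splitting p r a) - a \<in> su0_ideal"
proof (rule su0_ideal_trans)
  show "tmult (splitting p r a) - (\<Sum>n\<in>degrees p r a. hcomp r (int p * n) a) \<in> su0_ideal"
    unfolding splitting_def tmult_sum sum_subtractf[symmetric] by (intro su0_ideal_sum tmult_transl)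
  show "(\<Sum>n\<in>degrees p r a. hcomp r (int p * n) a) - a \<in> su0_ideal"
    by (rule su0_ideal_sym[OF sum_hcomp_degrees[OF assms finite_degrees order_refl]])
qed

theorem has_equivariant_splitting_L0: "has_equivariant_splitting p r"
  unfolding has_equivariant_splitting_def Let_def fmul_eq_times
  by (intro exI[of _ "splitting p r"] conjI ballI allI impI)
     (simp_all add: splitting_Tform splitting_cong splitting_add splitting_fsmul splitting_mult_left
       splitting_Ldeg tmult_splitting)

end

theorem theorem5p3:
  fixes p r :: nat
  assumes "0 < p" and "0 < r" and "coprime p r"
  shows "quantum_principal_fibration p r"
proof -
  interpret quantum_lens_space p r
    using assms(1,2) by unfold_locales
  show ?thesis
    using can_bijective_L0 has_equivariant_splitting_L0 by (simp add: quantum_principal_fibration_def)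
qed

end
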